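(* Let $(\eta_k)_{k\in\mathbb{N}}$ be independent identically distributed random variables with values in $\mathbb{N}$, $P(\eta_k=m)=p_m$ ($p_m\ge0$, $\sum_m p_m=1$), and let $$\eta=\sum_{k=1}^\infty\frac{(-1)^{k-1}}{\eta_1(\eta_1+\eta_2)\cdots(\eta_1+\eta_2+\dots+\eta_k)}.$$ Then the distribution $\mu_\eta$ of $\eta$ is invariant and ergodic with respect to the shift $T$.
   Context: Every irrational $x\in(0,1)$ has a unique representation ($\bar O^1$-expansion) $$x=\sum_{k=1}^\infty\frac{(-1)^{k-1}}{g_1(g_1+g_2)\cdots(g_1+g_2+\dots+g_k)}=:\bar O^1(g_1,g_2,\dots),\qquad g_k\in\mathbb{N},$$ and every infinite sequence of positive integers yields an irrational number in $(0,1)$ this way; so $\eta=\bar O^1(\eta_1,\eta_2,\dots)$. The shift $T$ is defined on irrationals of $(0,1)$ by $T(\bar O^1(g_1,g_2,g_3,\dots))=\bar O^1(g_2,g_3,\dots)$. A measure $\mu$ is $T$-invariant if $\mu(T^{-1}E)=\mu(E)$ for every Borel set $E$; it is $T$-ergodic if every Borel set $A$ with $T^{-1}A=A$ has $\mu(A)\in\{0,1\}$. *)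

theory Defs
  imports "HOL-Probability.Probability"
begin

text \<open>The alternating Ostrogradsky-type series; digits indexed from 0:
  obar g = sum_{k>=0} (-1)^k / (g0 (g0+g1) ... (g0+...+gk)).\<close>
definition obar :: "(nat \<Rightarrow> nat) \<Rightarrow> real" where
  "obar g = (\<Sum>k. (-1)^k / (\<Prod>j\<le>k. real (\<Sum>i\<le>j. g i)))"

definition irr01 :: "real set" where
  "irr01 = {x. 0 < x \<and> x < 1 \<and> x \<notin> \<rat>}"

definition odigits :: "real \<Rightarrow> nat \<Rightarrow> nat" where
  "odigits x = (THE g. (\<forall>k. 1 \<le> g k) \<and> obar g = x)"

definition oshift :: "real \<Rightarrow> real" where
  "oshift x = obar (\<lambda>k. odigits x (Suc k))"

end

theory Submission
  imports Defs
begin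

text \<open>The digits of an irrational x in (0,1) are recovered from x by a greedy algorithm, so obar is
  a measurable bijection from positive digit sequences onto the irrationals of (0,1) that conjugates
  the shift of sequences to T. Hence mu_eta is the image of the i.i.d. product measure under obar;
  invariance of the product measure under the coordinate shift gives T-invariance, and the preimage
  of a T-invariant set is an event depending only on eta_n, eta_(n+1), ... for every n, i.e. a tail
  event, which has probability 0 or 1 by Kolmogorov's 0-1 law.\<close>

text \<open>oseries s g is obar g with the first digit increased by s; the offset is what makes the
  tails of the series expressible again as such series (oseries_rec).\<close>

definition oterm :: "nat \<Rightarrow> (nat \<Rightarrow> nat) \<Rightarrow> nat \<Rightarrow> real" where
  "oterm s g k = 1 / (\<Prod>j\<le>k. real (s + (\<Sum>i\<le>j. g i)))"

definition oseries :: "nat \<Rightarrow> (nat \<Rightarrow> nat) \<Rightarrow> real" where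
  "oseries s g = (\<Sum>k. (-1)^k * oterm s g k)"

lemma obar_eq_oseries: "obar g = oseries 0 g"
  by (simp add: obar_def oseries_def oterm_def)

lemma psum_ge_Suc:
  assumes "\<forall>i. 1 \<le> g i" shows "Suc j \<le> s + (\<Sum>i\<le>j. g i)"
proof -
  have "(\<Sum>i\<le>j. (1::nat)) \<le> (\<Sum>i\<le>j. g i)" by (rule sum_mono) (use assms in auto)
  then show ?thesis by simp
qed

lemma oterm_denominator_ge:
  assumes "\<forall>i. 1 \<le> g i" shows "real (Suc k) \<le> (\<Prod>j\<le>k. real (s + (\<Sum>i\<le>j. g i)))"
proof (induction k)
  case 0 then show ?case using psum_ge_Suc[OF assms, of 0 s] by simp
next
  case (Suc k)
  have "real (Suc (Suc k)) \<le> real (s + (\<Sum>i\<le>Suc k. g i))"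
    using psum_ge_Suc[OF assms, of "Suc k" s] by (simp only: of_nat_le_iff)
  also have "\<dots> = 1 * real (s + (\<Sum>i\<le>Suc k. g i))" by simp
  also have "\<dots> \<le> (\<Prod>j\<le>k. real (s + (\<Sum>i\<le>j. g i))) * real (s + (\<Sum>i\<le>Suc k. g i))"
    using Suc by (intro mult_right_mono) (auto simp: sum_nonneg)
  finally show ?case by (simp add: mult.commute)
qed

lemma oterm_nonneg: assumes "\<forall>i. 1 \<le> g i" shows "0 \<le> oterm s g k"
  using oterm_denominator_ge[OF assms, of k s] by (simp add: oterm_def)

lemma oterm_Suc_le: assumes "\<forall>i. 1 \<le> g i" shows "oterm s g (Suc k) \<le> oterm s g k"
proof -
  have "1 \<le> real (s + (\<Sum>i\<le>Suc k. g i))" using psum_ge_Suc[OF assms, of "Suc k" s] by linarith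
  moreover have "1 \<le> (\<Prod>j\<le>k. real (s + (\<Sum>i\<le>j. g i)))"
    using oterm_denominator_ge[OF assms, of k s] by simp
  ultimately show ?thesis unfolding oterm_def
    by (simp add: frac_le mult_le_cancel_left1)
qed

lemma oterm_tendsto_0: assumes "\<forall>i. 1 \<le> g i" shows "oterm s g \<longlonglongrightarrow> 0"
proof (rule Lim_null_comparison[OF _ LIMSEQ_inverse_real_of_nat])
  show "\<forall>\<^sub>F k in sequentially. norm (oterm s g k) \<le> inverse (real (Suc k))"
  proof (intro always_eventually allI)
    fix k
    have "0 < real (Suc k)" by simp
    then show "norm (oterm s g k) \<le> inverse (real (Suc k))"
      using oterm_denominator_ge[OF assms, of k s] by (simp add: oterm_def divide_simps)
  qed
qed

lemma oseries_Leibniz: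
  assumes "\<forall>i. 1 \<le> g i"
  shows "summable (\<lambda>k. (-1)^k * oterm s g k)"
    and "oseries s g \<le> (\<Sum>k<2 * n + 1. (-1)^k * oterm s g k)"
  using summable_Leibniz'[of "oterm s g", OF oterm_tendsto_0 oterm_nonneg oterm_Suc_le,
      OF assms assms assms]
  unfolding oseries_def by auto

lemma oterm_Suc:
  "oterm s g (Suc k) = oterm (s + g 0) (\<lambda>i. g (Suc i)) k / real (s + g 0)"
proof -
  have shift: "\<And>j. s + (\<Sum>i\<le>Suc j. g i) = (s + g 0) + (\<Sum>i\<le>j. g (Suc i))"
    by (subst sum.atMost_Suc_shift) simp
  have "(\<Prod>j\<le>Suc k. real (s + (\<Sum>i\<le>j. g i)))
      = real (s + g 0) * (\<Prod>j\<le>k. real (s + (\<Sum>i\<le>Suc j. g i)))"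
    by (subst prod.atMost_Suc_shift) simp
  also have "\<dots> = real (s + g 0) * (\<Prod>j\<le>k. real ((s + g 0) + (\<Sum>i\<le>j. g (Suc i))))"
    by (simp only: shift)
  finally show ?thesis unfolding oterm_def by (simp add: field_simps)
qed

lemma oseries_rec:
  assumes "\<forall>i. 1 \<le> g i"
  shows "oseries s g = (1 - oseries (s + g 0) (\<lambda>i. g (Suc i))) / real (s + g 0)"
proof -
  let ?h = "\<lambda>i. g (Suc i)"
  have h: "\<forall>i. 1 \<le> ?h i" using assms by simp
  have "oseries s g = oterm s g 0 + (\<Sum>k. (-1)^Suc k * oterm s g (Suc k))"
    using suminf_split_head[OF oseries_Leibniz(1)[OF assms, of s]] unfolding oseries_def
    by (simp del: power_Suc)
  also have "(\<lambda>k. (-1)^Suc k * oterm s g (Suc k))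
      = (\<lambda>k. (- 1 / real (s + g 0)) * ((-1)^k * oterm (s + g 0) ?h k))"
    by (simp add: oterm_Suc)
  also have "(\<Sum>k. (- 1 / real (s + g 0)) * ((-1)^k * oterm (s + g 0) ?h k))
      = (- 1 / real (s + g 0)) * oseries (s + g 0) ?h"
    unfolding oseries_def by (rule suminf_mult[OF oseries_Leibniz(1)[OF h]])
  finally show ?thesis by (simp add: oterm_def diff_divide_distrib)
qed

lemma oseries_le: assumes "\<forall>i. 1 \<le> g i" shows "oseries s g \<le> 1 / real (s + g 0)"
  using oseries_Leibniz(2)[OF assms, of s 0] by (simp add: oterm_def)

lemma oseries_pos: assumes "\<forall>i. 1 \<le> g i" shows "0 < oseries s g"
proof -
  let ?h = "\<lambda>i. g (Suc i)"
  have "2 \<le> s + g 0 + ?h 0" using assms[rule_format, of 0] assms[rule_format, of 1] by simp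
  then have "1 / real (s + g 0 + ?h 0) < 1" by simp
  then have "oseries (s + g 0) ?h < 1"
    using oseries_le[of ?h "s + g 0"] assms by fastforce
  moreover have "1 \<le> real (s + g 0)" using assms by (simp add: add_increasing)
  ultimately show ?thesis by (simp add: oseries_rec[OF assms])
qed

lemma oseries_less: assumes "\<forall>i. 1 \<le> g i" shows "oseries s g < 1 / real (s + g 0)"
proof -
  have "0 < oseries (s + g 0) (\<lambda>i. g (Suc i))" using assms by (intro oseries_pos) simp
  moreover have "1 \<le> real (s + g 0)" using assms by (simp add: add_increasing)
  ultimately show ?thesis
    by (simp add: oseries_rec[OF assms] divide_strict_right_mono)
qed

lemma oseries_greater: assumes "\<forall>i. 1 \<le> g i" shows "1 / real (s + g 0 + 1) < oseries s g"
proof -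
  let ?m = "real (s + g 0)"
  have m: "1 \<le> ?m" using assms by (simp add: add_increasing)
  have "oseries (s + g 0) (\<lambda>i. g (Suc i)) < 1 / real (s + g 0 + g 1)"
    using oseries_less[of "\<lambda>i. g (Suc i)" "s + g 0"] assms by simp
  also have "\<dots> \<le> 1 / (?m + 1)" using assms m by (intro divide_left_mono) auto
  finally have "1 - 1 / (?m + 1) < 1 - oseries (s + g 0) (\<lambda>i. g (Suc i))" by simp
  then have "(1 - 1 / (?m + 1)) / ?m < oseries s g"
    using m by (simp add: oseries_rec[OF assms] divide_strict_right_mono)
  moreover have "(1 - 1 / (?m + 1)) / ?m = 1 / (?m + 1)"
  proof -
    have "1 - 1 / (?m + 1) = ?m / (?m + 1)" using m by (simp add: field_simps)
    then show ?thesis using m by simp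
  qed
  ultimately show ?thesis by (simp add: add.commute)
qed

lemma reciprocal_interval_unique:
  assumes "1 \<le> m" "1 \<le> n"
    and "1 / real (m + 1) < x" "x < 1 / real m" "1 / real (n + 1) < x" "x < 1 / real n"
  shows "m = n"
proof -
  have "\<not> m < n" if "1 / real (m + 1) < x" "x < 1 / real n" "1 \<le> m" for m n :: nat
  proof
    assume "m < n"
    then have "1 / real n \<le> 1 / real (m + 1)" using that by (intro divide_left_mono) auto
    with that show False by linarith
  qed
  with assms show ?thesis by (meson linorder_neqE_nat)
qed

lemma oseries_eq_imp_first_digit_eq:
  assumes g: "\<forall>i. 1 \<le> g i" and h: "\<forall>i. 1 \<le> h i" and eq: "oseries s g = oseries s h"
  shows "g 0 = h 0"
proof -
  have "s + g 0 = s + h 0"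
    using oseries_greater[OF g, of s] oseries_less[OF g, of s]
      oseries_greater[OF h, of s] oseries_less[OF h, of s] g h eq
    by (intro reciprocal_interval_unique[of _ _ "oseries s g"]) (auto simp: add_increasing)
  then show ?thesis by simp
qed

lemma oseries_eq_imp_digits_eq:
  assumes "\<forall>i. 1 \<le> g i" "\<forall>i. 1 \<le> h i" "oseries s g = oseries s h"
  shows "g n = h n"
  using assms
proof (induction n arbitrary: s g h)
  case 0 then show ?case by (rule oseries_eq_imp_first_digit_eq)
next
  case (Suc n)
  have first: "g 0 = h 0" using Suc.prems by (rule oseries_eq_imp_first_digit_eq)
  have "1 \<le> real (s + g 0)" using Suc.prems by (simp add: add_increasing)
  then have "oseries (s + g 0) (\<lambda>i. g (Suc i)) = oseries (s + g 0) (\<lambda>i. h (Suc i))"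
    using Suc.prems oseries_rec[of g s] oseries_rec[of h s] first by simp
  then show ?case using Suc.IH[of "\<lambda>i. g (Suc i)" "\<lambda>i. h (Suc i)"] Suc.prems by simp
qed

lemma obar_inj:
  assumes "\<forall>i. 1 \<le> g i" "\<forall>i. 1 \<le> h i" "obar g = obar h"
  shows "g = h"
  using oseries_eq_imp_digits_eq[of g h 0] assms by (auto simp: obar_eq_oseries)

text \<open>With S j = g 0 + ... + g j, the remainder of obar g after n terms is
  (-1)^n * otail g n / (S 0 * ... * S (n - 1)).\<close>

definition otail :: "(nat \<Rightarrow> nat) \<Rightarrow> nat \<Rightarrow> real" where
  "otail g n = oseries (\<Sum>i<n. g i) (\<lambda>k. g (k + n))"

lemma otail_0: "otail g 0 = obar g"
  by (simp add: otail_def obar_eq_oseries)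

lemma real_psum_lessThan_ge:
  assumes "\<forall>i. 1 \<le> g i" shows "real (Suc n) \<le> real (\<Sum>i<Suc n. g i)"
  using psum_ge_Suc[OF assms, of n 0] by (simp add: lessThan_Suc_atMost del: of_nat_sum)

lemma otail_Suc:
  assumes "\<forall>i. 1 \<le> g i"
  shows "otail g (Suc n) = 1 - real (\<Sum>i<Suc n. g i) * otail g n"
proof -
  have "otail g n = (1 - otail g (Suc n)) / real (\<Sum>i<Suc n. g i)"
    unfolding otail_def using oseries_rec[of "\<lambda>k. g (k + n)" "\<Sum>i<n. g i"] assms by simp
  moreover have "0 < real (\<Sum>i<Suc n. g i)" using real_psum_lessThan_ge[OF assms, of n] by linarith
  ultimately show ?thesis by (simp add: field_simps)
qed

lemma otail_pos: assumes "\<forall>i. 1 \<le> g i" shows "0 < otail g n"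
  unfolding otail_def using assms by (intro oseries_pos) simp

lemma otail_less: assumes "\<forall>i. 1 \<le> g i" shows "otail g n < 1 / real (\<Sum>i<Suc n. g i)"
  unfolding otail_def using oseries_less[of "\<lambda>k. g (k + n)" "\<Sum>i<n. g i"] assms by simp

text \<open>If obar g = a / b, then b * otail g n is an integer for every n (otail_Suc), yet lies
  strictly between 0 and 1 once n \<ge> b.\<close>

lemma obar_irrational: assumes "\<forall>i. 1 \<le> g i" shows "obar g \<notin> \<rat>"
proof
  assume "obar g \<in> \<rat>"
  then obtain a b :: int where b: "b > 0" and ab: "obar g = of_int a / of_int b"
    by (auto elim: Rats_cases')
  have "\<exists>z::int. of_int b * otail g n = of_int z" for n
  proof (induction n)
    case 0 then show ?case using b ab by (simp add: otail_0)
  next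
    case (Suc n)
    then obtain z where z: "of_int b * otail g n = of_int z" by blast
    have "of_int b * otail g (Suc n) = of_int b - real (\<Sum>i<Suc n. g i) * (of_int b * otail g n)"
      unfolding otail_Suc[OF assms] by (simp only: algebra_simps)
    then have "of_int b * otail g (Suc n) = of_int (b - int (\<Sum>i<Suc n. g i) * z)"
      unfolding z by simp
    then show ?case by blast
  qed
  then obtain z where z: "of_int b * otail g (nat b) = of_int z" by blast
  have "0 < of_int b * otail g (nat b)" using b otail_pos[OF assms] by simp
  moreover have "of_int b * otail g (nat b) < 1"
  proof -
    have "otail g (nat b) < 1 / real (\<Sum>i<Suc (nat b). g i)" by (rule otail_less[OF assms])
    also have "\<dots> \<le> 1 / real (Suc (nat b))"
      using real_psum_lessThan_ge[OF assms, of "nat b"] by (intro divide_left_mono) simp_all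
    finally show ?thesis using b otail_pos[OF assms, of "nat b"] by (simp add: field_simps)
  qed
  ultimately show False using z by simp
qed

lemma obar_in_irr01: assumes "\<forall>i. 1 \<le> g i" shows "obar g \<in> irr01"
proof -
  have "obar g < 1 / real (0 + g 0)" unfolding obar_eq_oseries by (rule oseries_less[OF assms])
  also have "\<dots> \<le> 1" using assms by (simp add: Suc_le_eq)
  finally show ?thesis
    using oseries_pos[OF assms] obar_irrational[OF assms]
    by (simp add: irr01_def obar_eq_oseries)
qed

lemma odigits_obar: assumes "\<forall>i. 1 \<le> g i" shows "odigits (obar g) = g"
  unfolding odigits_def by (rule the_equality) (use assms obar_inj in auto)

lemma oshift_obar:
  assumes "\<forall>i. 1 \<le> g i" shows "oshift (obar g) = obar (\<lambda>k. g (Suc k))"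
  by (simp add: oshift_def odigits_obar[OF assms])

lemma greedy_step:
  fixes t :: real
  assumes t: "t \<in> irr01"
  shows "1 \<le> \<lfloor>1/t\<rfloor>"
    and "of_int \<lfloor>1/t\<rfloor> * t < 1"
    and "1 - of_int \<lfloor>1/t\<rfloor> * t \<in> irr01"
    and "1 - of_int \<lfloor>1/t\<rfloor> * t < 1 / (of_int \<lfloor>1/t\<rfloor> + 1)"
proof -
  define s where "s = \<lfloor>1/t\<rfloor>"
  have t01: "0 < t" "t < 1" "t \<notin> \<rat>" using t by (auto simp: irr01_def)
  have "1/t \<notin> \<rat>"
    using Rats_inverse[of "1/t"] t01 by auto
  then have "of_int s \<noteq> 1/t" by (metis Rats_of_int)
  then have below: "of_int s < 1/t" unfolding s_def by (simp add: order_le_neq_trans)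
  have above: "1/t < of_int s + 1" unfolding s_def by linarith
  have s1: "1 \<le> s" unfolding s_def using t01 by (simp add: le_floor_iff)
  then show "1 \<le> \<lfloor>1/t\<rfloor>" unfolding s_def .
  have st: "of_int s * t < 1" using below t01 by (simp add: less_divide_eq)
  then show "of_int \<lfloor>1/t\<rfloor> * t < 1" unfolding s_def .
  have "1/t * t < (of_int s + 1) * t" using above t01(1) by (rule mult_strict_right_mono)
  then have "of_int s * 1 < of_int s * ((of_int s + 1) * t)"
    using s1 t01(1) by (intro mult_strict_left_mono) auto
  then have "(1 - of_int s * t) * (of_int s + 1) < 1" by (simp add: algebra_simps)
  then have r_less: "1 - of_int s * t < 1 / (of_int s + 1)"
    using s1 by (simp add: less_divide_eq)
  then show "1 - of_int \<lfloor>1/t\<rfloor> * t < 1 / (of_int \<lfloor>1/t\<rfloor> + 1)" unfolding s_def .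
  have "1 - of_int s * t \<notin> \<rat>"
  proof
    assume rat: "1 - of_int s * t \<in> \<rat>"
    have "inverse (of_int s) * (1 - (1 - of_int s * t)) \<in> \<rat>"
      by (rule Rats_mult[OF Rats_inverse[OF Rats_of_int] Rats_diff[OF Rats_1 rat]])
    moreover have "inverse (of_int s) * (1 - (1 - of_int s * t)) = t" using s1 by simp
    ultimately have "t \<in> \<rat>" by (simp only:)
    then show False using t01 by simp
  qed
  moreover have "1 / (of_int s + 1) \<le> (1::real)" using s1 by simp
  ultimately have "1 - of_int s * t \<in> irr01" using st r_less by (simp add: irr01_def)
  then show "1 - of_int \<lfloor>1/t\<rfloor> * t \<in> irr01" unfolding s_def .
qed

text \<open>The greedy algorithm recovering the digits of x: if x = obar g, then the n-th remainder is
  otail g n and the integer part of its reciprocal is g 0 + ... + g n.\<close>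

fun greedy_rem :: "real \<Rightarrow> nat \<Rightarrow> real" where
  "greedy_rem x 0 = x"
| "greedy_rem x (Suc n) = 1 - of_int \<lfloor>1 / greedy_rem x n\<rfloor> * greedy_rem x n"

definition greedy_psum :: "real \<Rightarrow> nat \<Rightarrow> nat" where
  "greedy_psum x n = nat \<lfloor>1 / greedy_rem x n\<rfloor>"

fun greedy_digits :: "real \<Rightarrow> nat \<Rightarrow> nat" where
  "greedy_digits x 0 = greedy_psum x 0"
| "greedy_digits x (Suc n) = greedy_psum x (Suc n) - greedy_psum x n"

lemma greedy_rem_in_irr01: "x \<in> irr01 \<Longrightarrow> greedy_rem x n \<in> irr01"
  by (induction n) (simp_all add: greedy_step(3))

lemma real_greedy_psum:
  "x \<in> irr01 \<Longrightarrow> real (greedy_psum x n) = of_int \<lfloor>1 / greedy_rem x n\<rfloor>"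
  unfolding greedy_psum_def
  by (rule of_nat_nat) (use greedy_step(1)[OF greedy_rem_in_irr01, of x n] in linarith)

lemma greedy_psum_pos: "x \<in> irr01 \<Longrightarrow> 1 \<le> greedy_psum x n"
  unfolding greedy_psum_def using nat_mono[OF greedy_step(1)[OF greedy_rem_in_irr01, of x n]] by simp

lemma greedy_rem_less:
  assumes x: "x \<in> irr01" shows "greedy_rem x n < 1 / real (greedy_psum x n)"
proof -
  have "real (greedy_psum x n) * greedy_rem x n < 1"
    using greedy_step(2)[OF greedy_rem_in_irr01[OF x, of n]] unfolding real_greedy_psum[OF x] .
  moreover have "0 < real (greedy_psum x n)" using greedy_psum_pos[OF x, of n] by simp
  ultimately show ?thesis by (simp add: less_divide_eq mult.commute)
qed

lemma greedy_psum_less_Suc: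
  assumes x: "x \<in> irr01" shows "greedy_psum x n < greedy_psum x (Suc n)"
proof -
  let ?t = "greedy_rem x (Suc n)" and ?s = "real (greedy_psum x n)"
  have t: "0 < ?t" using greedy_rem_in_irr01[OF x, of "Suc n"] unfolding irr01_def by blast
  have "?t < 1 / (?s + 1)"
    using greedy_step(4)[OF greedy_rem_in_irr01[OF x, of n]]
    unfolding greedy_rem.simps(2) real_greedy_psum[OF x] .
  then have "?s + 1 < 1 / ?t" using t by (simp add: field_simps)
  then have "int (greedy_psum x n) + 1 \<le> \<lfloor>1 / ?t\<rfloor>" by (simp add: le_floor_iff)
  then show ?thesis using real_greedy_psum[OF x, of "Suc n"] by simp
qed

lemma greedy_digits_pos: "x \<in> irr01 \<Longrightarrow> \<forall>i. 1 \<le> greedy_digits x i"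
proof
  fix i assume x: "x \<in> irr01"
  show "1 \<le> greedy_digits x i"
  proof (cases i)
    case (Suc m) then show ?thesis using greedy_psum_less_Suc[OF x, of m] by simp
  qed (use greedy_psum_pos[OF x, of 0] in simp)
qed

lemma greedy_digits_psum: "x \<in> irr01 \<Longrightarrow> (\<Sum>i<Suc n. greedy_digits x i) = greedy_psum x n"
  by (induction n) (auto simp: less_imp_le greedy_psum_less_Suc)

lemma obar_greedy_digits:
  assumes x: "x \<in> irr01" shows "obar (greedy_digits x) = x"
proof -
  let ?g = "greedy_digits x"
  have g: "\<forall>i. 1 \<le> ?g i" by (rule greedy_digits_pos[OF x])
  txt \<open>The error e n satisfies e (n + 1) = - S n * e n with S n \<ge> 1, so it never shrinks; but
    both terms lie in (0, 1 / S n) and S n \<ge> n + 1.\<close>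
  define e where "e n = otail ?g n - greedy_rem x n" for n
  have e_Suc: "e (Suc n) = - real (greedy_psum x n) * e n" for n
    unfolding e_def otail_Suc[OF g] greedy_digits_psum[OF x]
    by (simp add: real_greedy_psum[OF x] algebra_simps)
  have e_grows: "\<bar>e 0\<bar> \<le> \<bar>e n\<bar>" for n
  proof (induction n)
    case (Suc n)
    have "\<bar>e n\<bar> \<le> real (greedy_psum x n) * \<bar>e n\<bar>"
      using greedy_psum_pos[OF x, of n] by (simp add: mult_le_cancel_right1)
    then show ?case using Suc by (simp add: e_Suc abs_mult)
  qed simp
  have e_small: "\<bar>e n\<bar> < 1 / real (Suc n)" for n
  proof -
    have "otail ?g n < 1 / real (greedy_psum x n)"
      using otail_less[OF g, of n] unfolding greedy_digits_psum[OF x] .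
    then have "\<bar>e n\<bar> < 1 / real (greedy_psum x n)"
      using otail_pos[OF g, of n] greedy_rem_less[OF x, of n] greedy_rem_in_irr01[OF x, of n]
      unfolding e_def irr01_def by auto
    also have "\<dots> \<le> 1 / real (Suc n)"
      using real_psum_lessThan_ge[OF g, of n] unfolding greedy_digits_psum[OF x]
      by (intro divide_left_mono) simp_all
    finally show ?thesis .
  qed
  have "e 0 = 0"
  proof (rule ccontr)
    assume "e 0 \<noteq> 0"
    then have "0 < \<bar>e 0\<bar>" by simp
    then obtain n where "inverse (real (Suc n)) < \<bar>e 0\<bar>" using reals_Archimedean by blast
    then show False using e_grows[of n] e_small[of n] by (simp add: inverse_eq_divide)
  qed
  then show ?thesis by (simp add: e_def otail_0)
qed

lemma odigits_eq_greedy_digits: "x \<in> irr01 \<Longrightarrow> odigits x = greedy_digits x"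
  using odigits_obar[OF greedy_digits_pos, of x] obar_greedy_digits[of x] by simp

lemma obar_measurable[measurable]:
  assumes [measurable]: "\<And>k. (\<lambda>x. real (f k x)) \<in> borel_measurable N"
  shows "(\<lambda>x. obar (\<lambda>k. f k x)) \<in> borel_measurable N"
  unfolding obar_def of_nat_sum by measurable

lemma obar_measurable_PiM: "obar \<in> borel_measurable (\<Pi>\<^sub>M i\<in>UNIV. count_space UNIV)"
  using obar_measurable[of "\<lambda>k g. g k"] by simp

lemma greedy_rem_measurable[measurable]: "(\<lambda>x. greedy_rem x n) \<in> borel_measurable borel"
  by (induction n) simp_all

lemma greedy_psum_measurable[measurable]: "(\<lambda>x. real (greedy_psum x n)) \<in> borel_measurable borel"
proof -
  have "real (nat z) = max 0 (real_of_int z)" for z by (cases "0 \<le> z") auto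
  then show ?thesis unfolding greedy_psum_def by simp
qed

lemma greedy_digits_measurable[measurable]: "(\<lambda>x. real (greedy_digits x n)) \<in> borel_measurable borel"
proof -
  have "real (a - b) = max 0 (real a - real b)" for a b by (cases "b \<le> a") auto
  then show ?thesis by (cases n) simp_all
qed

lemma irr01_sets: "irr01 \<in> sets borel"
proof -
  have "{0<..<1::real} \<in> sets borel" by simp
  moreover have "\<rat> \<in> sets (borel :: real measure)" by (rule sets.countable) (auto simp: countable_rat)
  ultimately have "{0<..<1} - \<rat> \<in> sets (borel :: real measure)" by (rule sets.Diff)
  moreover have "irr01 = {0<..<1} - \<rat>" by (auto simp: irr01_def)
  ultimately show ?thesis by simp
qed

lemma oshift_vimage_sets:
  assumes E: "E \<in> sets borel" shows "{x \<in> irr01. oshift x \<in> E} \<in> sets borel"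
proof -
  have "{x \<in> irr01. oshift x \<in> E} = (\<lambda>x. obar (\<lambda>k. greedy_digits x (Suc k))) -` E \<inter> irr01"
    by (auto simp: oshift_def odigits_eq_greedy_digits)
  also have "\<dots> \<in> sets borel"
    by (intro sets.Int irr01_sets measurable_sets_borel[OF _ E]) measurable
  finally show ?thesis .
qed

lemma (in prob_space) distr_iid_shift:
  fixes X :: "nat \<Rightarrow> 'a \<Rightarrow> 'b"
  assumes indep: "indep_vars (\<lambda>_. N) X UNIV"
    and ident: "\<And>i. distr M N (X i) = distr M N (X 0)"
    and f: "f \<in> (\<Pi>\<^sub>M i\<in>UNIV. N) \<rightarrow>\<^sub>M K"
  shows "distr M K (\<lambda>\<omega>. f (\<lambda>k. X (Suc k) \<omega>)) = distr M K (\<lambda>\<omega>. f (\<lambda>k. X k \<omega>))"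
proof -
  let ?D = "distr M N (X 0)"
  let ?P = "\<Pi>\<^sub>M i\<in>UNIV. ?D"
  define Z where "Z = (\<lambda>\<omega>. \<lambda>i\<in>UNIV. X i \<omega>)"
  define sh :: "(nat \<Rightarrow> 'b) \<Rightarrow> nat \<Rightarrow> 'b" where "sh = (\<lambda>\<omega>. \<lambda>n\<in>UNIV. \<omega> (Suc n))"
  have rv: "X i \<in> M \<rightarrow>\<^sub>M N" for i using indep unfolding indep_vars_def by blast
  have sets_P: "sets ?P = sets (\<Pi>\<^sub>M i\<in>UNIV. N)" by (intro sets_PiM_cong) simp_all
  have Z: "Z \<in> M \<rightarrow>\<^sub>M ?P"
    unfolding Z_def measurable_cong_sets[OF refl sets_P] by (rule measurable_restrict) (rule rv)
  have f': "f \<in> ?P \<rightarrow>\<^sub>M K" using f measurable_cong_sets[OF sets_P refl] by blast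
  have sh: "sh \<in> ?P \<rightarrow>\<^sub>M ?P"
    unfolding sh_def by (rule measurable_restrict) (rule measurable_component_singleton, simp)
  have "distr M ?P Z = distr M (\<Pi>\<^sub>M i\<in>UNIV. N) Z" by (rule distr_cong[OF refl sets_P refl])
  also have "\<dots> = (\<Pi>\<^sub>M i\<in>UNIV. distr M N (X i))"
    unfolding Z_def by (rule indep_vars_iff_distr_eq_PiM'[THEN iffD1, OF _ rv indep]) simp
  also have "\<dots> = ?P" by (intro PiM_cong refl ident)
  finally have distr_Z: "distr M ?P Z = ?P" .
  have distr_sh: "distr ?P ?P sh = ?P"
    unfolding sh_def using distr_PiM_reindex[of UNIV "\<lambda>_. ?D" Suc UNIV] prob_space_distr[OF rv]
    by simp
  have "distr M K (\<lambda>\<omega>. f (\<lambda>k. X (Suc k) \<omega>)) = distr M K (f \<circ> sh \<circ> Z)"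
    by (simp add: Z_def sh_def comp_def restrict_UNIV)
  also have "\<dots> = distr (distr M ?P Z) K (f \<circ> sh)"
    using measurable_comp[OF sh f'] Z by (simp add: distr_distr)
  also have "\<dots> = distr (distr ?P ?P sh) K f"
    using f' sh by (simp add: distr_Z distr_distr)
  also have "\<dots> = distr (distr M ?P Z) K f" by (simp only: distr_sh distr_Z)
  also have "\<dots> = distr M K (\<lambda>\<omega>. f (\<lambda>k. X k \<omega>))"
    using f' Z by (simp add: distr_distr Z_def comp_def restrict_UNIV)
  finally show ?thesis .
qed

lemma (in prob_space) shift_invariant_event_prob_0_1:
  fixes X :: "nat \<Rightarrow> 'a \<Rightarrow> 'b"
  assumes indep: "indep_vars (\<lambda>_. N) X UNIV"
    and f: "f \<in> (\<Pi>\<^sub>M i\<in>UNIV. N) \<rightarrow>\<^sub>M K" and A: "A \<in> sets K"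
    and invariant:
      "\<And>n \<omega>. \<omega> \<in> space M \<Longrightarrow> f (\<lambda>k. X (k + n) \<omega>) \<in> A \<longleftrightarrow> f (\<lambda>k. X k \<omega>) \<in> A"
  shows "prob {\<omega> \<in> space M. f (\<lambda>k. X k \<omega>) \<in> A} = 0
       \<or> prob {\<omega> \<in> space M. f (\<lambda>k. X k \<omega>) \<in> A} = 1"
proof -
  txt \<open>For every n the event is measurable w.r.t. X n, X (n + 1), ..., hence a tail event.\<close>
  define B where "B = {\<omega> \<in> space M. f (\<lambda>k. X k \<omega>) \<in> A}"
  define G where "G i = {X i -` S \<inter> space M | S. S \<in> sets N}" for i
  define F where "F i = sigma_sets (space M) (G i)" for i
  have rv: "X i \<in> M \<rightarrow>\<^sub>M N" for i using indep unfolding indep_vars_def by blast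
  have G_space: "G i \<subseteq> Pow (space M)" for i unfolding G_def by blast
  have F_space: "F i \<subseteq> Pow (space M)" for i
    unfolding F_def using sigma_sets_into_sp[OF G_space] by blast
  have "B \<in> tail_events F"
    unfolding tail_events_def
  proof
    fix n
    let ?T = "sigma (space M) (\<Union> (F ` {n..}))"
    have space_T: "space ?T = space M" using F_space by (simp add: space_measure_of_conv)
    have sets_T: "sets ?T = sigma_sets (space M) (\<Union> (F ` {n..}))"
      using F_space by (intro sets_measure_of) blast
    have "X (k + n) \<in> ?T \<rightarrow>\<^sub>M N" for k
    proof (rule measurableI)
      fix S assume "S \<in> sets N"
      then have "X (k + n) -` S \<inter> space M \<in> F (k + n)" unfolding F_def G_def by blast
      then show "X (k + n) -` S \<inter> space ?T \<in> sets ?T"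
        unfolding space_T sets_T by (intro sigma_sets.Basic UN_I[of "k + n"]) auto
    qed (use measurable_space[OF rv] space_T in auto)
    then have "(\<lambda>\<omega>. \<lambda>k\<in>UNIV. X (k + n) \<omega>) \<in> ?T \<rightarrow>\<^sub>M (\<Pi>\<^sub>M i\<in>UNIV. N)"
      by (intro measurable_restrict)
    then have "(\<lambda>\<omega>. f (\<lambda>k. X (k + n) \<omega>)) \<in> ?T \<rightarrow>\<^sub>M K"
      using measurable_comp[OF _ f] by (simp add: comp_def restrict_UNIV)
    then have "(\<lambda>\<omega>. f (\<lambda>k. X (k + n) \<omega>)) -` A \<inter> space ?T \<in> sets ?T"
      using A by (rule measurable_sets)
    moreover have "(\<lambda>\<omega>. f (\<lambda>k. X (k + n) \<omega>)) -` A \<inter> space ?T = B"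
      unfolding space_T B_def using invariant by auto
    ultimately show "B \<in> sigma_sets (space M) (\<Union> (F ` {n..}))" by (simp add: sets_T)
  qed
  moreover have "sigma_algebra (space M) (F i)" for i
    unfolding F_def by (rule sigma_algebra_sigma_sets[OF G_space])
  moreover have "indep_sets F UNIV"
    using indep unfolding indep_vars_def F_def G_def by simp
  ultimately show ?thesis unfolding B_def[symmetric] by (intro kolmogorov_0_1_law)
qed

lemma oshift_obar_offset:
  assumes "\<forall>i. 1 \<le> g i"
  shows "oshift (obar (\<lambda>k. g (k + n))) = obar (\<lambda>k. g (k + Suc n))"
  using oshift_obar[of "\<lambda>k. g (k + n)"] assms by simp

lemma (in prob_space) distr_obar_oshift_invariant:
  assumes indep: "indep_vars (\<lambda>_. count_space UNIV) \<eta> UNIV"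
    and pos: "\<And>k \<omega>. \<omega> \<in> space M \<Longrightarrow> 1 \<le> \<eta> k \<omega>"
    and ident: "\<And>i. distr M (count_space UNIV) (\<eta> i) = distr M (count_space UNIV) (\<eta> 0)"
    and E: "E \<in> sets borel"
  shows "emeasure (distr M borel (\<lambda>\<omega>. obar (\<lambda>k. \<eta> k \<omega>))) {x \<in> irr01. oshift x \<in> E}
       = emeasure (distr M borel (\<lambda>\<omega>. obar (\<lambda>k. \<eta> k \<omega>))) E"
proof -
  have [measurable]: "\<eta> k \<in> M \<rightarrow>\<^sub>M count_space UNIV" for k
    using indep unfolding indep_vars_def by blast
  have "obar (\<lambda>k. \<eta> k \<omega>) \<in> irr01 \<and> oshift (obar (\<lambda>k. \<eta> k \<omega>)) = obar (\<lambda>k. \<eta> (Suc k) \<omega>)"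
    if "\<omega> \<in> space M" for \<omega>
    using pos[OF that] by (simp add: obar_in_irr01 oshift_obar)
  then have "(\<lambda>\<omega>. obar (\<lambda>k. \<eta> k \<omega>)) -` {x \<in> irr01. oshift x \<in> E} \<inter> space M
      = (\<lambda>\<omega>. obar (\<lambda>k. \<eta> (Suc k) \<omega>)) -` E \<inter> space M"
    by auto
  then have "emeasure (distr M borel (\<lambda>\<omega>. obar (\<lambda>k. \<eta> k \<omega>))) {x \<in> irr01. oshift x \<in> E}
      = emeasure (distr M borel (\<lambda>\<omega>. obar (\<lambda>k. \<eta> (Suc k) \<omega>))) E"
    using E oshift_vimage_sets[OF E] by (simp add: emeasure_distr)
  also have "\<dots> = emeasure (distr M borel (\<lambda>\<omega>. obar (\<lambda>k. \<eta> k \<omega>))) E"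
    using distr_iid_shift[OF indep ident obar_measurable_PiM] by simp
  finally show ?thesis .
qed

lemma (in prob_space) distr_obar_oshift_ergodic:
  assumes indep: "indep_vars (\<lambda>_. count_space UNIV) \<eta> UNIV"
    and pos: "\<And>k \<omega>. \<omega> \<in> space M \<Longrightarrow> 1 \<le> \<eta> k \<omega>"
    and A: "A \<in> sets borel" and invariant: "{x \<in> irr01. oshift x \<in> A} = A"
  shows "measure (distr M borel (\<lambda>\<omega>. obar (\<lambda>k. \<eta> k \<omega>))) A = 0
       \<or> measure (distr M borel (\<lambda>\<omega>. obar (\<lambda>k. \<eta> k \<omega>))) A = 1"
proof -
  have [measurable]: "\<eta> k \<in> M \<rightarrow>\<^sub>M count_space UNIV" for k
    using indep unfolding indep_vars_def by blast
  have "obar (\<lambda>k. \<eta> (k + n) \<omega>) \<in> A \<longleftrightarrow> obar (\<lambda>k. \<eta> k \<omega>) \<in> A" if "\<omega> \<in> space M" for n \<omega>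
  proof (induction n)
    case (Suc n)
    have digits: "\<forall>k. 1 \<le> \<eta> k \<omega>" using pos[OF that] by simp
    then have "obar (\<lambda>k. \<eta> (k + n) \<omega>) \<in> irr01" by (intro obar_in_irr01) simp
    then have "obar (\<lambda>k. \<eta> (k + Suc n) \<omega>) \<in> A
        \<longleftrightarrow> obar (\<lambda>k. \<eta> (k + n) \<omega>) \<in> {x \<in> irr01. oshift x \<in> A}"
      by (simp add: oshift_obar_offset[OF digits])
    with Suc show ?case by (simp add: invariant)
  qed simp
  then have "prob {\<omega> \<in> space M. obar (\<lambda>k. \<eta> k \<omega>) \<in> A} = 0
      \<or> prob {\<omega> \<in> space M. obar (\<lambda>k. \<eta> k \<omega>) \<in> A} = 1"
    by (intro shift_invariant_event_prob_0_1[OF indep obar_measurable_PiM A])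
  moreover have "{\<omega> \<in> space M. obar (\<lambda>k. \<eta> k \<omega>) \<in> A}
      = (\<lambda>\<omega>. obar (\<lambda>k. \<eta> k \<omega>)) -` A \<inter> space M"
    by auto
  ultimately show ?thesis using A by (simp add: measure_distr)
qed

theorem lemma2:
  fixes M :: "'a measure" and \<eta> :: "nat \<Rightarrow> 'a \<Rightarrow> nat" and p :: "nat \<Rightarrow> real"
  assumes "prob_space M"
    and "prob_space.indep_vars M (\<lambda>_. count_space UNIV) \<eta> UNIV"
    and "\<And>k \<omega>. \<omega> \<in> space M \<Longrightarrow> 1 \<le> \<eta> k \<omega>"
    and "\<And>k m. measure M {\<omega> \<in> space M. \<eta> k \<omega> = m} = p m"
  shows "(\<forall>E \<in> sets borel.
            emeasure (distr M borel (\<lambda>\<omega>. obar (\<lambda>k. \<eta> k \<omega>))) {x \<in> irr01. oshift x \<in> E}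
          = emeasure (distr M borel (\<lambda>\<omega>. obar (\<lambda>k. \<eta> k \<omega>))) E)
       \<and> (\<forall>A \<in> sets borel. {x \<in> irr01. oshift x \<in> A} = A \<longrightarrow>
            measure (distr M borel (\<lambda>\<omega>. obar (\<lambda>k. \<eta> k \<omega>))) A = 0 \<or>
            measure (distr M borel (\<lambda>\<omega>. obar (\<lambda>k. \<eta> k \<omega>))) A = 1)"
proof -
  interpret prob_space M by fact
  have rv: "\<eta> k \<in> M \<rightarrow>\<^sub>M count_space UNIV" for k
    using assms(2) unfolding indep_vars_def by blast
  have ident: "distr M (count_space UNIV) (\<eta> i) = distr M (count_space UNIV) (\<eta> 0)" for i
  proof (rule measure_eqI_countable[where A=UNIV])
    fix m :: nat
    have "emeasure (distr M (count_space UNIV) (\<eta> k)) {m} = p m" for k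
      using assms(4)[of k m] rv[of k]
      by (simp add: emeasure_distr emeasure_eq_measure vimage_def Int_def conj_commute)
    then show "emeasure (distr M (count_space UNIV) (\<eta> i)) {m}
        = emeasure (distr M (count_space UNIV) (\<eta> 0)) {m}"
      by simp
  qed simp_all
  show ?thesis
    using distr_obar_oshift_invariant[OF assms(2,3) ident] distr_obar_oshift_ergodic[OF assms(2,3)]
    by blast
qed

end
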